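(* Let $z_1,\dots,z_5$ be nonzero complex numbers with $|z_1|\ge|z_2|\ge\cdots\ge|z_5|$ and $z_i^{-1}=z_{6-i}$ for $1\le i\le 5$. Then $$\sum_{i=1}^5|z_i|\le 2\Big|\sum_{i=1}^5 z_i^2\Big|^{1/2}+2\Big|\sum_{i=1}^5 z_i\Big|+15.$$ *)

theory Defs
  imports "HOL-Analysis.Analysis"
begin

end

theory Submission
  imports Defs
begin

text \<open>The hypotheses force \<open>z\<^sub>3\<^sup>2 = 1\<close>, so \<open>z\<^sub>3, z\<^sub>4, z\<^sub>5\<close> lie in the closed unit disc
  and contribute at most 3 to each of the three sums. For the two large terms one uses
  \<open>|p| + |q| \<le> |p + q| + |p - q|\<close> together with \<open>(p - q)\<^sup>2 = 2(p\<^sup>2 + q\<^sup>2) - (p + q)\<^sup>2\<close>,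
  which bounds \<open>|p| + |q|\<close> by \<open>2|p + q| + \<surd>2 \<surd>|p\<^sup>2 + q\<^sup>2|\<close>.\<close>

lemma norm_add_norm_le_norm_add_norm_diff:
  fixes p q :: "'a::real_normed_vector"
  shows "norm p + norm q \<le> norm (p + q) + norm (p - q)"
proof -
  have "2 * norm p \<le> norm (p + q) + norm (p - q)"
    using norm_triangle_ineq[of "p + q" "p - q"] by (simp add: scaleR_2[symmetric])
  moreover have "2 * norm q \<le> norm (p + q) + norm (p - q)"
    using norm_triangle_ineq[of "p + q" "q - p"] by (simp add: scaleR_2[symmetric] norm_minus_commute)
  ultimately show ?thesis by linarith
qed

lemma norm_diff_le_norm_add_sqrt_sum_squares:
  fixes p q :: "'a::real_normed_field"
  shows "norm (p - q) \<le> norm (p + q) + sqrt 2 * sqrt (norm (p\<^sup>2 + q\<^sup>2))"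
proof -
  have "(p - q)\<^sup>2 = 2 * (p\<^sup>2 + q\<^sup>2) - (p + q)\<^sup>2"
    by (simp add: power2_eq_square algebra_simps)
  then have "(norm (p - q))\<^sup>2 \<le> 2 * norm (p\<^sup>2 + q\<^sup>2) + (norm (p + q))\<^sup>2"
    by (metis norm_triangle_ineq4 norm_power norm_mult norm_numeral)
  then have "norm (p - q) \<le> sqrt (2 * norm (p\<^sup>2 + q\<^sup>2) + (norm (p + q))\<^sup>2)"
    using real_le_rsqrt by blast
  also have "\<dots> \<le> sqrt (2 * norm (p\<^sup>2 + q\<^sup>2)) + norm (p + q)"
    using sqrt_add_le_add_sqrt[of "2 * norm (p\<^sup>2 + q\<^sup>2)" "(norm (p + q))\<^sup>2"] by simp
  finally show ?thesis by (simp add: real_sqrt_mult)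
qed

lemma norm_add_norm_le_norm_add_sqrt_sum_squares:
  fixes p q :: "'a::real_normed_field"
  shows "norm p + norm q \<le> 2 * norm (p + q) + sqrt 2 * sqrt (norm (p\<^sup>2 + q\<^sup>2))"
  using norm_add_norm_le_norm_add_norm_diff[of p q] norm_diff_le_norm_add_sqrt_sum_squares[of p q]
  by linarith

lemma norm_self_inverse:
  fixes z :: "'a::real_normed_div_algebra"
  assumes "z \<noteq> 0" and "inverse z = z"
  shows "norm z = 1"
proof -
  have "norm z * norm z = 1"
    using assms by (metis norm_inverse right_inverse norm_eq_zero)
  then show ?thesis
    by (metis mult_cancel_right1 norm_ge_zero abs_of_nonneg abs_square_eq_1 power2_eq_square)
qed

lemma norm_sum_le_card:
  fixes f :: "'i \<Rightarrow> 'a::real_normed_vector"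
  assumes "\<And>i. i \<in> A \<Longrightarrow> norm (f i) \<le> 1"
  shows "norm (sum f A) \<le> card A"
  using norm_sum[of f A] sum_bounded_above[of A "\<lambda>i. norm (f i)" 1] assms by force

lemma sqrt_two_mult_sqrt_add_three_le:
  fixes t :: real
  assumes "0 \<le> t"
  shows "sqrt 2 * sqrt (t + 3) \<le> 2 * sqrt t + 3"
proof -
  have "sqrt 2 * sqrt (t + 3) \<le> sqrt 2 * (sqrt t + sqrt 3)"
    using sqrt_add_le_add_sqrt[of t 3] assms by (simp add: mult_left_mono)
  also have "\<dots> = sqrt 2 * sqrt t + sqrt 6"
    by (simp add: distrib_left real_sqrt_mult[symmetric])
  also have "\<dots> \<le> 2 * sqrt t + 3"
  proof -
    have "sqrt 2 \<le> 2" and "sqrt 6 \<le> 3"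
      using real_le_lsqrt[of 2 2] real_le_lsqrt[of 3 6] by simp_all
    then show ?thesis by (intro add_mono mult_right_mono) (simp_all add: assms)
  qed
  finally show ?thesis .
qed

lemma sum_one_five_split:
  fixes f :: "nat \<Rightarrow> 'a::comm_monoid_add"
  shows "(\<Sum>i=1..5. f i) = f 1 + f 2 + (\<Sum>i=3..5. f i)"
  by (simp add: sum.atLeast_Suc_atMost numeral_eq_Suc add.assoc)

theorem lemma3p8:
  fixes z :: "nat \<Rightarrow> complex"
  assumes nz: "\<And>i. i \<in> {1..5} \<Longrightarrow> z i \<noteq> 0"
    and ord: "\<And>i. i \<in> {1..4} \<Longrightarrow> norm (z (Suc i)) \<le> norm (z i)"
    and inv: "\<And>i. i \<in> {1..5} \<Longrightarrow> inverse (z i) = z (6 - i)"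
  shows "(\<Sum>i=1..5. norm (z i))
           \<le> 2 * sqrt (norm (\<Sum>i=1..5. (z i)^2)) + 2 * norm (\<Sum>i=1..5. z i) + 15"
proof -
  have "norm (z 3) = 1"
    using norm_self_inverse nz[of 3] inv[of 3] by simp
  then have tail: "norm (z i) \<le> 1" if "i \<in> {3..5}" for i
    using that ord[of 3] ord[of 4] by (auto simp: numeral_eq_Suc le_Suc_eq)
  have tail_sums: "norm (\<Sum>i=3..5. z i) \<le> 3" "norm (\<Sum>i=3..5. (z i)\<^sup>2) \<le> 3"
    using norm_sum_le_card[of "{3..5}" z] norm_sum_le_card[of "{3..5}" "\<lambda>i. (z i)\<^sup>2"] tail
    by (simp_all add: norm_power power_le_one)
  have head: "z 1 + z 2 = (\<Sum>i=1..5. z i) - (\<Sum>i=3..5. z i)"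
    "(z 1)\<^sup>2 + (z 2)\<^sup>2 = (\<Sum>i=1..5. (z i)\<^sup>2) - (\<Sum>i=3..5. (z i)\<^sup>2)"
    unfolding sum_one_five_split by simp_all
  have "norm (z 1 + z 2) \<le> norm (\<Sum>i=1..5. z i) + 3"
    unfolding head using tail_sums(1) by (intro order_trans[OF norm_triangle_ineq4]) simp
  moreover have "norm ((z 1)\<^sup>2 + (z 2)\<^sup>2) \<le> norm (\<Sum>i=1..5. (z i)\<^sup>2) + 3"
    unfolding head using tail_sums(2) by (intro order_trans[OF norm_triangle_ineq4]) simp
  ultimately have "norm (z 1) + norm (z 2)
      \<le> 2 * (norm (\<Sum>i=1..5. z i) + 3) + sqrt 2 * sqrt (norm (\<Sum>i=1..5. (z i)\<^sup>2) + 3)"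
    using norm_add_norm_le_norm_add_sqrt_sum_squares[of "z 1" "z 2"]
    by (smt (verit) mult_left_mono real_sqrt_le_mono real_sqrt_ge_zero)
  moreover have "(\<Sum>i=3..5. norm (z i)) \<le> 3"
    using sum_bounded_above[of "{3..5}" "\<lambda>i. norm (z i)" 1] tail by simp
  ultimately show ?thesis
    using sqrt_two_mult_sqrt_add_three_le[of "norm (\<Sum>i=1..5. (z i)\<^sup>2)"]
    unfolding sum_one_five_split[of "\<lambda>i. norm (z i)"] by simp
qed

end
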